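(* Let $k\ge 4$, $n=2k-1$, $\lambda\in\overline{\mathcal{U}}_{T_n}$, and let $Y=\mathrm{KN}(S_\lambda)$. Write the elements of $S_\lambda$ increasingly as $0=s_0<s_1<\cdots$ and let $z$ be the index with $s_z=n-2$. Then: (1) the cell in row $z+1$ and column $z+1$ does not belong to $Y$; (2) column $z+1$ of $Y$ contains exactly $z$ cells; (3) the main diagonal of $Y$ contains exactly $z$ cells.
   Context: A partition of $N$ into distinct parts is a sequence $\lambda=(\lambda_1<\dots<\lambda_t)$ of positive integers with sum $N$ and $t\ge 2$, identified with its set of parts. Missing parts: $\mathcal{M}_\lambda=\{1,\dots,\lambda_t\}\setminus\lambda$. $\lambda$ is refinable if two distinct missing parts sum to a part of $\lambda$, unrefinable otherwise; $\mathcal{U}_N$ is the set of unrefinable partitions of $N$. An element of $\mathcal{U}_N$ is maximal if its largest part is the maximum of the largest parts of elements of $\mathcal{U}_N$; $\widetilde{\mathcal{U}}_N$ is the set of these and $\overline{\mathcal{U}}_N=\{\lambda\in\widetilde{\mathcal{U}}_N:\#\mathcal{M}_\lambda=\lfloor\lambda_t/2\rfloor\}$. $T_n=n(n+1)/2$. For $\lambda\in\overline{\mathcal{U}}_{T_n}$ (with $n=2k-1$, $k\ge 4$) one knows $\lambda_t=2n-4$, $t=n-2$ and $n-2\notin\lambda$. $S_\lambda=\mathbb{N}_0\setminus\lambda$. The Keith–Nath transformation sends a set $S\subseteq\mathbb{N}_0$ with $0\in S$ and finite complement to the Young diagram $\mathrm{KN}(S)$ whose boundary is the lattice path that, starting at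 the origin, takes for $j=0,1,\dots,\max(\mathbb{N}_0\setminus S)$ an east step if $j\in S$ and a north step otherwise. Diagrams are in English convention (rows numbered from the top, columns from the left); the main diagonal consists of the cells in row $i$, column $i$. *)

theory Defs
  imports Main "HOL-Library.Infinite_Set"
begin

text \<open>Partitions into distinct parts are identified with their (finite) sets of parts.\<close>

definition distinct_partition :: "nat \<Rightarrow> nat set \<Rightarrow> bool" where
  "distinct_partition N lam \<longleftrightarrow>
     finite lam \<and> 0 \<notin> lam \<and> \<Sum>lam = N \<and> card lam \<ge> 2"

definition missing_parts :: "nat set \<Rightarrow> nat set" where
  "missing_parts lam = {1..Max lam} - lam"

definition refinable :: "nat set \<Rightarrow> bool" where
  "refinable lam \<longleftrightarrow>
     (\<exists>a\<in>missing_parts lam. \<exists>b\<in>missing_parts lam. a \<noteq> b \<and> a + b \<in> lam)"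

definition unrefinable_parts :: "nat \<Rightarrow> nat set set" where
  "unrefinable_parts N = {lam. distinct_partition N lam \<and> \<not> refinable lam}"

definition maximal_unrefinable :: "nat \<Rightarrow> nat set set" where
  "maximal_unrefinable N =
     {lam \<in> unrefinable_parts N. \<forall>mu \<in> unrefinable_parts N. Max mu \<le> Max lam}"

definition Ubar :: "nat \<Rightarrow> nat set set" where
  "Ubar N = {lam \<in> maximal_unrefinable N. card (missing_parts lam) = Max lam div 2}"

definition T :: "nat \<Rightarrow> nat" where
  "T n = n * (n + 1) div 2"

text \<open>Keith--Nath diagram of S (0 in S, finite complement). The lattice path takes, for
  j = 0,1,..., an east step if j \<in> S and a north step otherwise. The north step for the
  gap g is at x-coordinate card {s\<in>S. s<g}. In English convention row i (from the top)
  corresponds to the i-th largest gap, and consists of the cells in columns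
  1..card {s\<in>S. s < g_i}. Cells are pairs (row, column), 1-indexed.\<close>
definition KN :: "nat set \<Rightarrow> (nat \<times> nat) set" where
  "KN S = {(i, j). 1 \<le> i \<and> i \<le> card (- S) \<and> 1 \<le> j \<and>
       j \<le> card {s \<in> S. s < rev (sorted_list_of_set (- S)) ! (i - 1)}}"

end

theory Submission
  imports Defs
begin

(* Row i of KN(S_lam) belongs to the i-th largest part p of lam and has as many cells as there
   are non-parts below p.  Such a row is longer than z = #{non-parts below n - 2} exactly when
   p > n - 2.  Since lam has n - 2 parts, n - 2 - z of them below n - 2, exactly z parts exceed
   n - 2: rows 1..z are longer than z and all later rows have at most z cells, which gives all
   three claims.

   That lam has n - 2 parts follows from its largest part being m = 2n - 4.  Maximality against
   the unrefinable partition {1, ..., n - 3, n + 1, 2n - 4} gives m >= 2n - 4.  Unrefinability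
   puts a part in each pair {a, m - a} with 2a < m, and #M = floor(m/2) allows only one; the
   resulting formula for the sum T_n excludes m = 2n - 3 and m = 2n - 2 by parity and
   m >= 2n - 1 by size. *)

lemma less_iff_card_less_below:
  fixes S :: "nat set"
  assumes "a \<in> S"
  shows "a < b \<longleftrightarrow> card {s\<in>S. s < a} < card {s\<in>S. s < b}"
proof
  assume "a < b"
  then have "{s\<in>S. s < a} \<subset> {s\<in>S. s < b}"
    using assms by auto
  then show "card {s\<in>S. s < a} < card {s\<in>S. s < b}"
    by (rule psubset_card_mono[rotated]) simp
next
  assume "card {s\<in>S. s < a} < card {s\<in>S. s < b}"
  moreover have "card {s\<in>S. s < b} \<le> card {s\<in>S. s < a}" if "b \<le> a"
    using that by (intro card_mono) auto
  ultimately show "a < b"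
    by (meson not_less)
qed

lemma less_iff_card_greater_less:
  fixes A :: "'a::linorder set"
  assumes "finite A" and "b \<in> A"
  shows "a < b \<longleftrightarrow> card {p\<in>A. b < p} < card {p\<in>A. a < p}"
proof
  assume "a < b"
  then have "{p\<in>A. b < p} \<subset> {p\<in>A. a < p}"
    using assms(2) by auto
  then show "card {p\<in>A. b < p} < card {p\<in>A. a < p}"
    using assms(1) by (simp add: psubset_card_mono)
next
  assume "card {p\<in>A. b < p} < card {p\<in>A. a < p}"
  moreover have "card {p\<in>A. a < p} \<le> card {p\<in>A. b < p}" if "b \<le> a"
    using that assms(1) by (intro card_mono) auto
  ultimately show "a < b"
    by (meson not_less)
qed

lemma card_less_enumerate:
  fixes S :: "nat set"
  assumes "infinite S"
  shows "card {s\<in>S. s < enumerate S n} = n"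
proof -
  have "{s\<in>S. s < enumerate S n} = enumerate S ` {..<n}"
  proof (intro subset_antisym subsetI)
    fix s assume s: "s \<in> {s\<in>S. s < enumerate S n}"
    then obtain j where "enumerate S j = s"
      using enumerate_Ex[OF assms] by blast
    with s show "s \<in> enumerate S ` {..<n}"
      using assms by auto
  qed (use assms enumerate_in_set in auto)
  moreover have "inj_on (enumerate S) {..<n}"
    using inj_enumerate[OF assms] by (rule inj_on_subset) simp
  ultimately show ?thesis
    by (simp add: card_image)
qed

lemma card_greater_nth_sorted_list_of_set:
  fixes A :: "'a::linorder set"
  assumes "finite A" and "j < card A"
  shows "card {p\<in>A. sorted_list_of_set A ! j < p} = card A - Suc j"
proof -
  let ?xs = "sorted_list_of_set A"
  have len: "length ?xs = card A"
    by simp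
  have nth_less_iff: "?xs ! j < ?xs ! i \<longleftrightarrow> j < i" if "i < card A" for i
    using sorted_wrt_nth_less[OF strict_sorted_list_of_set] assms that
    by (metis not_less_iff_gr_or_eq len)
  have "{p\<in>A. ?xs ! j < p} = (!) ?xs ` {j<..<card A}"
  proof -
    have mem: "p \<in> A \<longleftrightarrow> (\<exists>i<card A. ?xs ! i = p)" for p
      using assms(1) by (metis in_set_conv_nth len set_sorted_list_of_set)
    show ?thesis
      using nth_less_iff by (auto simp: mem image_iff)
  qed
  moreover have "inj_on ((!) ?xs) {j<..<card A}"
    by (rule inj_on_nth) auto
  ultimately show ?thesis
    by (simp add: card_image)
qed

lemma card_greater_add_eq:
  fixes lam :: "nat set"
  assumes "finite lam" and "x \<notin> lam"
  shows "card {p\<in>lam. x < p} + x = card lam + card {s\<in>- lam. s < x}"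
proof -
  have below: "{..<x} = {p\<in>lam. p < x} \<union> {s\<in>- lam. s < x}"
    by auto
  have "card {..<x} = card {p\<in>lam. p < x} + card {s\<in>- lam. s < x}"
    unfolding below by (rule card_Un_disjoint) auto
  moreover have parts: "lam = {p\<in>lam. p < x} \<union> {p\<in>lam. x < p}"
    using assms(2) by auto (metis linorder_neqE_nat)
  have "card lam = card {p\<in>lam. p < x} + card {p\<in>lam. x < p}"
    by (subst parts, rule card_Un_disjoint) (use assms(1) in auto)
  ultimately show ?thesis
    by simp
qed

lemma KN_row_longer_iff:
  fixes S :: "nat set"
  assumes fin: "finite (- S)" and x: "x \<in> S" and i: "1 \<le> i" "i \<le> card (- S)"
  shows "card {s\<in>S. s < x} < card {s\<in>S. s < rev (sorted_list_of_set (- S)) ! (i - 1)}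
     \<longleftrightarrow> i \<le> card {g\<in>- S. x < g}"
proof -
  define y where "y = rev (sorted_list_of_set (- S)) ! (i - 1)"
  have y: "y = sorted_list_of_set (- S) ! (card (- S) - i)"
    unfolding y_def using i by (simp add: rev_nth Suc_diff_Suc)
  have "y \<in> - S"
    using nth_mem[of "card (- S) - i" "sorted_list_of_set (- S)"] fin i unfolding y by simp
  moreover have "card {g\<in>- S. y < g} = i - 1"
    using card_greater_nth_sorted_list_of_set[OF fin, of "card (- S) - i"] i unfolding y by simp
  ultimately have "x < y \<longleftrightarrow> i - 1 < card {g\<in>- S. x < g}"
    using less_iff_card_greater_less[OF fin] by presburger
  then show ?thesis
    unfolding y_def[symmetric] using i less_iff_card_less_below[OF x, of y] by linarith
qed

lemma KN_column_diagonal: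
  assumes fin: "finite (- S)" and x: "x \<in> S"
    and below: "card {s\<in>S. s < x} = z" and above: "card {g\<in>- S. x < g} = z"
  shows "{i. (i, z + 1) \<in> KN S} = {1..z}" and "{i. (i, i) \<in> KN S} = {1..z}"
proof -
  define L where "L i = card {s\<in>S. s < rev (sorted_list_of_set (- S)) ! (i - 1)}" for i
  have KN: "(i, j) \<in> KN S \<longleftrightarrow> 1 \<le> i \<and> i \<le> card (- S) \<and> 1 \<le> j \<and> j \<le> L i" for i j
    unfolding KN_def L_def by simp
  have "z \<le> card (- S)"
    unfolding above[symmetric] using fin by (intro card_mono) auto
  moreover have "z < L i \<longleftrightarrow> i \<le> z" if "1 \<le> i" "i \<le> card (- S)" for i
    using KN_row_longer_iff[OF fin x that] unfolding L_def below above .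
  ultimately have long_row: "1 \<le> i \<and> i \<le> card (- S) \<and> z < L i \<longleftrightarrow> i \<in> {1..z}" for i
    by auto
  have "(i, z + 1) \<in> KN S \<longleftrightarrow> i \<in> {1..z}" for i
    using long_row[of i] unfolding KN by (simp add: Suc_le_eq)
  then show "{i. (i, z + 1) \<in> KN S} = {1..z}"
    by blast
  have "(i, i) \<in> KN S \<longleftrightarrow> i \<in> {1..z}" for i
    using long_row[of i] unfolding KN by (cases "i \<le> z") auto
  then show "{i. (i, i) \<in> KN S} = {1..z}"
    by blast
qed

lemma unrefinable_witness:
  fixes n :: nat
  assumes "7 \<le> n"
  shows "{1..<n-2} \<union> {n+1, 2*n-4} \<in> unrefinable_parts (T n)"
proof -
  define r where "r = n - 2"
  have r5: "5 \<le> r" and n: "n = r + 2"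
    using assms unfolding r_def by auto
  define W where "W = {1..<r} \<union> {r+3, 2*r}"
  have W: "{1..<n-2} \<union> {n+1, 2*n-4} = W"
    unfolding W_def r_def using assms by (auto simp: numeral_eq_Suc)
  have gauss: "2 * (\<Sum>a\<in>{1..<r}. a) = (r - 1) * r"
    using double_gauss_sum_from_Suc_0[of "r - 1", where 'a=nat] r5
    by (simp add: atLeastLessThanSuc_atLeastAtMost[symmetric])
  have "\<Sum>W = (\<Sum>a\<in>{1..<r}. a) + (r + 3) + 2 * r"
    unfolding W_def using r5 by (simp add: sum.union_disjoint)
  then have "2 * \<Sum>W = 2 * T n"
    unfolding T_def n using gauss r5 by (simp add: algebra_simps)
  moreover have "card W \<ge> 2"
    using card_mono[of W "{r+3, 2*r}"] r5 unfolding W_def by auto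
  ultimately have "distinct_partition (T n) W"
    unfolding distinct_partition_def W_def using r5 by auto
  moreover have "\<not> refinable W"
  proof
    assume "refinable W"
    then obtain a b where ab: "a \<in> missing_parts W" "b \<in> missing_parts W" "a \<noteq> b" "a + b \<in> W"
      unfolding refinable_def by blast
    have "r \<le> a" "r \<le> b"
      using ab(1,2) unfolding missing_parts_def W_def by auto
    moreover have "a + b \<le> 2 * r"
      using ab(4) r5 unfolding W_def by auto
    ultimately show False
      using ab(3) by simp
  qed
  ultimately show ?thesis
    unfolding W unrefinable_parts_def by simp
qed

lemma Max_ge_of_maximal_unrefinable:
  assumes "7 \<le> n" and "lam \<in> maximal_unrefinable (T n)"
  shows "2 * n - 4 \<le> Max lam"
proof -
  have "Max ({1..<n-2} \<union> {n+1, 2*n-4}) = 2 * n - 4"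
    using assms(1) by (intro Max_eqI) auto
  then show ?thesis
    using assms unrefinable_witness unfolding maximal_unrefinable_def by fastforce
qed

lemma unrefinable_complement_mem:
  assumes "\<not> refinable lam" and "Max lam \<in> lam" and "1 \<le> a" and "2 * a < Max lam"
  shows "a \<in> lam \<or> Max lam - a \<in> lam"
proof (rule ccontr)
  assume "\<not> ?thesis"
  then have "a \<in> missing_parts lam" and "Max lam - a \<in> missing_parts lam"
    using assms(3,4) unfolding missing_parts_def by auto
  moreover have "a \<noteq> Max lam - a" and "a + (Max lam - a) \<in> lam"
    using assms(2,4) by auto
  ultimately show False
    using assms(1) unfolding refinable_def by blast
qed

lemma card_of_half_missing:
  assumes "finite lam" and "0 \<notin> lam" and "lam \<noteq> {}"
    and "card (missing_parts lam) = Max lam div 2"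
  shows "card lam = Max lam - Max lam div 2"
proof -
  have "lam \<subseteq> {1..Max lam}"
    using assms(1,2) by (auto simp: Suc_le_eq) (metis gr0I)
  then show ?thesis
    using assms(4) card_mono[of "{1..Max lam}" lam]
    unfolding missing_parts_def by (simp add: card_Diff_subset assms(1))
qed

lemma double_sum_half_missing_unrefinable:
  assumes fin: "finite lam" and "0 \<notin> lam" and "lam \<noteq> {}" and unref: "\<not> refinable lam"
    and half: "card (missing_parts lam) = Max lam div 2"
  defines "m \<equiv> Max lam" and "r \<equiv> (Max lam - 1) div 2"
  shows "2 * \<Sum>lam = 2 * m + r * (r + 1) + 2 * (\<Sum>a\<in>{1..r} - lam. m - 2 * a)"
proof -
  have m: "m \<in> lam"
    unfolding m_def using assms(1,3) by simp
  then have r: "2 * r < m"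
    using assms(2) unfolding r_def m_def by (cases "Max lam") auto
  \<comment> \<open>g picks a part from each pair {a, m - a}; as card (lam - {m}) = r, it is a bijection\<close>
  define g where "g a = (if a \<in> lam then a else m - a)" for a
  have g_mem: "g a \<in> lam - {m}" if "a \<in> {1..r}" for a
    using unrefinable_complement_mem[OF unref, of a] m that unfolding g_def m_def r_def by auto
  have inj: "inj_on g {1..r}"
  proof (rule inj_onI)
    fix a b
    assume "a \<in> {1..r}" and "b \<in> {1..r}" and "g a = g b"
    with r show "a = b"
      unfolding g_def by (auto split: if_splits)
  qed
  have "card (lam - {m}) = r"
    using card_of_half_missing[OF assms(1-3) half] m fin unfolding m_def r_def by simp
  then have "card (g ` {1..r}) = card (lam - {m})"
    using inj by (simp add: card_image)
  moreover have "g ` {1..r} \<subseteq> lam - {m}"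
    using g_mem by blast
  ultimately have g_image: "g ` {1..r} = lam - {m}"
    using fin by (simp add: card_subset_eq)
  have "\<Sum>lam = m + \<Sum>(lam - {m})"
    using fin m by (simp add: sum.remove)
  also have "\<Sum>(lam - {m}) = (\<Sum>a\<in>{1..r}. g a)"
    unfolding g_image[symmetric] using inj by (simp add: sum.reindex)
  also have "\<dots> = (\<Sum>a\<in>{1..r}. a) + (\<Sum>a\<in>{1..r} - lam. m - 2 * a)"
  proof -
    have "g a = a + (if a \<in> lam then 0 else m - 2 * a)" if "a \<in> {1..r}" for a
      using that unfolding g_def r_def m_def by auto
    then show ?thesis
      by (simp add: sum.distrib sum.If_cases Diff_eq)
  qed
  finally show ?thesis
    using double_gauss_sum_from_Suc_0[of r, where 'a=nat] by simp
qed

lemma sum_odd_minus_double_ne_2: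
  fixes m :: nat
  assumes "odd m" and "B \<subseteq> {..m div 2}"
  shows "(\<Sum>a\<in>B. m - 2 * a) \<noteq> 2"
proof (cases "B \<subseteq> {m div 2}")
  case True
  then have "(\<Sum>a\<in>B. m - 2 * a) \<le> (\<Sum>a\<in>{m div 2}. m - 2 * a)"
    by (intro sum_mono2) auto
  also have "\<dots> = 1"
    using assms(1) by simp presburger
  finally show ?thesis
    by simp
next
  case False
  then obtain a where "a \<in> B" and "a < m div 2"
    using assms(2) by fastforce
  moreover have "finite B"
    using assms(2) finite_subset by blast
  ultimately have "m - 2 * a \<le> (\<Sum>a\<in>B. m - 2 * a)"
    by (intro member_le_sum) auto
  moreover have "3 \<le> m - 2 * a"
    using assms(1) \<open>a < m div 2\<close> by presburger
  ultimately show ?thesis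
    by simp
qed

lemma Max_le_of_half_missing:
  fixes n :: nat
  assumes "2 \<le> n" and "lam \<in> unrefinable_parts (T n)"
    and half: "card (missing_parts lam) = Max lam div 2"
  shows "Max lam \<le> 2 * n - 4"
proof (rule ccontr)
  assume too_large: "\<not> Max lam \<le> 2 * n - 4"
  define m where "m = Max lam"
  define r where "r = (Max lam - 1) div 2"
  define E where "E = (\<Sum>a\<in>{1..r} - lam. m - 2 * a)"
  have "finite lam" and "0 \<notin> lam" and "lam \<noteq> {}" and "\<not> refinable lam" and "\<Sum>lam = T n"
    using assms(2) unfolding unrefinable_parts_def distinct_partition_def by auto
  then have sum: "n * (n + 1) = 2 * m + r * (r + 1) + 2 * E"
    using double_sum_half_missing_unrefinable[OF _ _ _ _ half]
    unfolding m_def r_def E_def T_def by simp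
  obtain q where n: "n = q + 2"
    using assms(1) by (metis add.commute le_Suc_ex)
  from too_large consider "m = 2 * n - 3" | "m = 2 * n - 2" | "2 * n - 1 \<le> m"
    unfolding m_def by linarith
  then show False
  proof cases
    case 1
    then have "r = q" and "E = 2"
      using sum unfolding r_def m_def[symmetric] n by (auto simp: algebra_simps)
    moreover have "odd m" and "{1..r} - lam \<subseteq> {..m div 2}"
      using 1 unfolding r_def m_def[symmetric] n by auto
    ultimately show False
      using sum_odd_minus_double_ne_2 unfolding E_def by blast
  next
    case 2
    then have "E = 1"
      using sum unfolding r_def m_def[symmetric] n by (auto simp: algebra_simps)
    moreover have "even E"
      using 2 unfolding E_def by (intro dvd_sum) auto
    ultimately show False
      by simp
  next
    case 3
    then have "n - 1 \<le> r"
      unfolding r_def m_def[symmetric] by linarith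
    then have "(q + 1) * (q + 2) \<le> r * (r + 1)"
      unfolding n by (intro mult_le_mono) auto
    then show False
      using sum 3 unfolding n by (simp add: algebra_simps)
  qed
qed

lemma card_of_Ubar:
  fixes n :: nat
  assumes "7 \<le> n" and "lam \<in> Ubar (T n)"
  shows "card lam = n - 2"
proof -
  have unref: "lam \<in> unrefinable_parts (T n)" and half: "card (missing_parts lam) = Max lam div 2"
    and max: "lam \<in> maximal_unrefinable (T n)"
    using assms(2) unfolding Ubar_def maximal_unrefinable_def by auto
  have "Max lam = 2 * n - 4"
    using Max_ge_of_maximal_unrefinable[OF assms(1) max] Max_le_of_half_missing[OF _ unref half] assms(1)
    by linarith
  moreover have "finite lam" and "0 \<notin> lam" and "lam \<noteq> {}"
    using unref unfolding unrefinable_parts_def distinct_partition_def by auto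
  ultimately show ?thesis
    using card_of_half_missing[OF _ _ _ half] by simp
qed

theorem lemma3p5:
  fixes k n z :: nat and lam :: "nat set"
  assumes "k \<ge> 4" and "n = 2 * k - 1"
    and "lam \<in> Ubar (T n)"
    and "enumerate (- lam) z = n - 2"
  shows "(z + 1, z + 1) \<notin> KN (- lam)
       \<and> card {i. (i, z + 1) \<in> KN (- lam)} = z
       \<and> card {i. (i, i) \<in> KN (- lam)} = z"
proof -
  have n: "7 \<le> n"
    using assms(1,2) by simp
  have fin: "finite lam"
    using assms(3) unfolding Ubar_def maximal_unrefinable_def unrefinable_parts_def
      distinct_partition_def by auto
  then have inf: "infinite (- lam)"
    using Diff_infinite_finite infinite_UNIV_nat unfolding Compl_eq_Diff_UNIV by blast
  have gap: "n - 2 \<in> - lam"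
    using enumerate_in_set[OF inf, of z] assms(4) by simp
  have below: "card {s\<in>- lam. s < n - 2} = z"
    using card_less_enumerate[OF inf, of z] assms(4) by simp
  have "card {p\<in>lam. n - 2 < p} = z"
    using card_greater_add_eq[OF fin, of "n - 2"] gap below card_of_Ubar[OF n assms(3)] by simp
  then have column: "{i. (i, z + 1) \<in> KN (- lam)} = {1..z}"
    and diagonal: "{i. (i, i) \<in> KN (- lam)} = {1..z}"
    using KN_column_diagonal[OF _ gap below] fin by simp_all
  have "(z + 1, z + 1) \<notin> KN (- lam)"
  proof
    assume "(z + 1, z + 1) \<in> KN (- lam)"
    then have "z + 1 \<in> {1..z}"
      unfolding diagonal[symmetric] by simp
    then show False
      by simp
  qed
  with column diagonal show ?thesis
    by simp
qed

end
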